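(* Let $\mathcal{A}:\mathbb{R}^{n_1\times n_2}\to\mathbb{R}^m$ be linear, $R\ge1$, $\alpha,\beta>0$, $\hat X=\sum_{r=1}^R\hat u^r(\hat v^r)^T$ with $\hat u^r\in\mathbb{R}^{n_1}$, $\hat v^r\in\mathbb{R}^{n_2}$, $\eta\in\mathbb{R}^m$ and $y=\mathcal{A}(\hat X)+\eta$. Let $(u^1_{\alpha,\beta},\dots,v^R_{\alpha,\beta})$ be a global minimizer of $J^R_{\alpha,\beta}$ and $X_{\alpha,\beta}=\sum_{r=1}^R u^r_{\alpha,\beta}(v^r_{\alpha,\beta})^T$. If $\|y-\mathcal{A}(X_{\alpha,\beta})\|_2\ge\|\eta\|_2$, then $$\sum_{r=1}^R\|u^r_{\alpha,\beta}\|_2^2\le C_{2,1}\sqrt[3]{\beta^2/\alpha^2}\sum_{r=1}^R(\|\hat u^r\|_2\|\hat v^r\|_1)^{2/3},\qquad \sum_{r=1}^R\|v^r_{\alpha,\beta}\|_1\le C_{2,1}\sqrt[3]{\alpha/\beta}\sum_{r=1}^R(\|\hat u^r\|_2\|\hat v^r\|_1)^{2/3},$$ and $$\sum_{r=1}^R(\|u^r_{\alpha,\beta}\|_2\|v^r_{\alpha,\beta}\|_1)^{2/3}\le\sum_{r=1}^R(\|\hat u^r\|_2\|\hat v^r\|_1)^{2/3}.$$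
   Context: For $y\in\mathbb{R}^m$ and $\alpha,\beta>0$, the functional $J^R_{\alpha,\beta}:(\mathbb{R}^{n_1})^R\times(\mathbb{R}^{n_2})^R\to\mathbb{R}$ is $$J^R_{\alpha,\beta}(u^1,\dots,u^R,v^1,\dots,v^R)=\Big\|y-\mathcal{A}\Big(\sum_{r=1}^Ru^r(v^r)^T\Big)\Big\|_2^2+\alpha\sum_{r=1}^R\|u^r\|_2^2+\beta\sum_{r=1}^R\|v^r\|_1.$$ The constant is $C_{2,1}=(1/2)^{2/3}+2^{1/3}$. *)

theory Defs
  imports "HOL-Analysis.Analysis"
begin

definition outer :: "real^'n1 \<Rightarrow> real^'n2 \<Rightarrow> real^'n2^'n1" where
  "outer u v = (\<chi> i j. u $ i * v $ j)"

definition l1norm :: "real^'n \<Rightarrow> real" where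
  "l1norm v = (\<Sum>j\<in>UNIV. \<bar>v $ j\<bar>)"

definition J :: "(real^'n2^'n1 \<Rightarrow> real^'m) \<Rightarrow> real^'m \<Rightarrow> real \<Rightarrow> real \<Rightarrow> nat
     \<Rightarrow> (nat \<Rightarrow> real^'n1) \<Rightarrow> (nat \<Rightarrow> real^'n2) \<Rightarrow> real" where
  "J A y \<alpha> \<beta> R u v =
     (norm (y - A (\<Sum>r<R. outer (u r) (v r))))\<^sup>2
     + \<alpha> * (\<Sum>r<R. (norm (u r))\<^sup>2) + \<beta> * (\<Sum>r<R. l1norm (v r))"

definition C21 :: real where
  "C21 = (1/2) powr (2/3) + 2 powr (1/3)"

end

theory Submission
  imports Defs
begin

text \<open>
  For p, q \<ge> 0 weighted AM-GM gives p t^2 + q/t \<ge> C21 p^(1/3) q^(2/3) for all t > 0, with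
  equality for a suitable t.  Rescaling a factor pair (a, b) to (t a, b/t) keeps the outer product,
  so every pair can be balanced to penalty \<alpha> |a|_2^2 + \<beta> |b|_1 exactly
  C21 \<alpha>^(1/3) \<beta>^(2/3) (|a|_2 |b|_1)^(2/3), and no pair has smaller penalty.  The balanced
  ground truth has misfit |\<eta>|_2, which by assumption does not exceed the misfit of the minimiser,
  so minimality bounds the minimiser's total penalty by C21 \<alpha>^(1/3) \<beta>^(2/3) times the
  ground truth sum.  Dropping one of the two penalty sums gives the first two estimates; the
  termwise lower bound gives the third.
\<close>

lemma powr_one_third_cube:
  fixes x :: real
  assumes "x \<ge> 0"
  shows "(x powr (1/3)) ^ 3 = x"
proof -
  have "(x powr (1/3)) ^ 3 = x powr (1/3 + 1/3 + 1/3)"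
    by (simp only: power3_eq_cube powr_add)
  then show ?thesis using assms by simp
qed

lemma powr_one_third_square:
  fixes x :: real
  shows "(x powr (1/3))\<^sup>2 = x powr (2/3)"
proof -
  have "(x powr (1/3))\<^sup>2 = x powr (1/3 + 1/3)"
    by (simp only: power2_eq_square powr_add)
  then show ?thesis by simp
qed

lemma C21_mult_two_powr: "C21 * 2 powr (2/3) = 3"
proof -
  have "C21 * 2 powr (2/3) = ((1/2) * 2) powr (2/3) + 2 powr (1/3 + 2/3)"
    unfolding C21_def by (simp only: distrib_right powr_mult powr_add)
  also have "\<dots> = 3" by simp
  finally show ?thesis .
qed

lemma C21_pos: "C21 > 0"
  unfolding C21_def by (intro add_pos_pos) simp_all

lemma cube_amgm:
  fixes x z :: real
  assumes "x \<ge> 0" "z \<ge> 0"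
  shows "3 * x * z\<^sup>2 \<le> x ^ 3 + 2 * z ^ 3"
proof -
  have "x ^ 3 + 2 * z ^ 3 - 3 * x * z\<^sup>2 = (x - z)\<^sup>2 * (x + 2 * z)"
    by (simp add: algebra_simps power2_eq_square power3_eq_cube)
  moreover have "(x - z)\<^sup>2 * (x + 2 * z) \<ge> 0" using assms by simp
  ultimately show ?thesis by linarith
qed

text \<open>Writing p = x^3 and q = 2 z^3 turns C21 p^(1/3) q^(2/3) into 3 x z^2.\<close>

lemma C21_powr_cube_form:
  fixes p q :: real
  assumes "q \<ge> 0"
  shows "C21 * p powr (1/3) * q powr (2/3) = 3 * p powr (1/3) * ((q/2) powr (1/3))\<^sup>2"
proof -
  have "q powr (2/3) = 2 powr (2/3) * ((q/2) powr (1/3))\<^sup>2"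
    using assms powr_mult[of 2 "q/2" "2/3"] by (simp add: powr_one_third_square)
  then have "C21 * p powr (1/3) * q powr (2/3)
      = (C21 * 2 powr (2/3)) * p powr (1/3) * ((q/2) powr (1/3))\<^sup>2"
    by (simp only: mult_ac)
  then show ?thesis by (simp only: C21_mult_two_powr)
qed

lemma C21_powr_le_add:
  fixes p q :: real
  assumes "p \<ge> 0" "q \<ge> 0"
  shows "C21 * p powr (1/3) * q powr (2/3) \<le> p + q"
proof -
  define x where "x = p powr (1/3)"
  define z where "z = (q/2) powr (1/3)"
  have "C21 * p powr (1/3) * q powr (2/3) = 3 * x * z\<^sup>2"
    using C21_powr_cube_form[of q p] assms by (simp add: x_def z_def)
  also have "\<dots> \<le> x ^ 3 + 2 * z ^ 3"
    by (rule cube_amgm) (simp_all add: x_def z_def)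
  also have "\<dots> = p + q"
    using assms by (simp add: x_def z_def powr_one_third_cube)
  finally show ?thesis .
qed

lemma C21_powr_attained:
  fixes p q :: real
  assumes "p > 0" "q > 0"
  obtains t where "t > 0" "p * t\<^sup>2 + q / t = C21 * p powr (1/3) * q powr (2/3)"
proof
  define x where "x = p powr (1/3)"
  define z where "z = (q/2) powr (1/3)"
  have "x > 0" "z > 0" using assms by (simp_all add: x_def z_def)
  then show "z / x > 0" by simp
  have "p = x ^ 3" "q = 2 * z ^ 3"
    using assms by (simp_all add: x_def z_def powr_one_third_cube)
  then have "p * (z/x)\<^sup>2 + q / (z/x) = 3 * x * z\<^sup>2"
    using \<open>x > 0\<close> \<open>z > 0\<close> by (simp add: field_simps power2_eq_square power3_eq_cube)
  also have "\<dots> = C21 * p powr (1/3) * q powr (2/3)"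
    using C21_powr_cube_form[of q p] assms by (simp add: x_def z_def)
  finally show "p * (z/x)\<^sup>2 + q / (z/x) = C21 * p powr (1/3) * q powr (2/3)" .
qed

lemma square_powr_one_third:
  fixes a :: real
  assumes "a \<ge> 0"
  shows "(a\<^sup>2) powr (1/3) = a powr (2/3)"
proof -
  have "(a\<^sup>2) powr (1/3) = (a powr 2) powr (1/3)"
    using powr_realpow'[of a 2] assms by simp
  also have "\<dots> = a powr (2/3)"
    unfolding powr_powr by simp
  finally show ?thesis .
qed

lemma powr_one_third_mult_powr_two_thirds:
  fixes \<alpha> \<beta> a b :: real
  assumes "\<alpha> \<ge> 0" "\<beta> \<ge> 0" "a \<ge> 0" "b \<ge> 0"
  shows "(\<alpha> * a\<^sup>2) powr (1/3) * (\<beta> * b) powr (2/3)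
       = \<alpha> powr (1/3) * \<beta> powr (2/3) * (a * b) powr (2/3)"
proof -
  have "(\<alpha> * a\<^sup>2) powr (1/3) = \<alpha> powr (1/3) * a powr (2/3)"
    using assms by (simp add: powr_mult square_powr_one_third)
  moreover have "(\<beta> * b) powr (2/3) = \<beta> powr (2/3) * b powr (2/3)"
    using assms by (simp add: powr_mult)
  moreover have "(a * b) powr (2/3) = a powr (2/3) * b powr (2/3)"
    using assms by (simp add: powr_mult)
  ultimately show ?thesis by (simp add: mult_ac)
qed

lemma l1norm_nonneg: "l1norm v \<ge> 0"
  unfolding l1norm_def by (simp add: sum_nonneg)

lemma l1norm_scaleR: "l1norm (c *\<^sub>R v) = \<bar>c\<bar> * l1norm v"
  unfolding l1norm_def by (simp add: abs_mult sum_distrib_left)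

lemma l1norm_eq_zero_iff: "l1norm v = 0 \<longleftrightarrow> v = 0"
  unfolding l1norm_def by (simp add: sum_nonneg_eq_0_iff vec_eq_iff)

lemma outer_zero_left [simp]: "outer 0 v = 0"
  unfolding outer_def by (simp add: vec_eq_iff)

lemma outer_zero_right [simp]: "outer u 0 = 0"
  unfolding outer_def by (simp add: vec_eq_iff)

lemma outer_scaleR_inverse: "t \<noteq> 0 \<Longrightarrow> outer (t *\<^sub>R u) (inverse t *\<^sub>R v) = outer u v"
  unfolding outer_def by (simp add: vec_eq_iff)

definition rank_one_penalty :: "real \<Rightarrow> real \<Rightarrow> real^'n1 \<Rightarrow> real^'n2 \<Rightarrow> real" where
  "rank_one_penalty \<alpha> \<beta> u v = \<alpha> * (norm u)\<^sup>2 + \<beta> * l1norm v"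

lemma J_eq_misfit_plus_penalty:
  "J A y \<alpha> \<beta> R u v = (norm (y - A (\<Sum>r<R. outer (u r) (v r))))\<^sup>2
     + (\<Sum>r<R. rank_one_penalty \<alpha> \<beta> (u r) (v r))"
  unfolding J_def rank_one_penalty_def by (simp add: sum.distrib sum_distrib_left)

lemma rank_one_penalty_lower_bound:
  assumes "\<alpha> \<ge> 0" "\<beta> \<ge> 0"
  shows "C21 * \<alpha> powr (1/3) * \<beta> powr (2/3) * (norm u * l1norm v) powr (2/3)
       \<le> rank_one_penalty \<alpha> \<beta> u v"
proof -
  have "C21 * \<alpha> powr (1/3) * \<beta> powr (2/3) * (norm u * l1norm v) powr (2/3)
      = C21 * (\<alpha> * (norm u)\<^sup>2) powr (1/3) * (\<beta> * l1norm v) powr (2/3)"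
    using powr_one_third_mult_powr_two_thirds[of \<alpha> \<beta> "norm u" "l1norm v"] assms
    by (simp add: l1norm_nonneg mult_ac)
  also have "\<dots> \<le> rank_one_penalty \<alpha> \<beta> u v"
    unfolding rank_one_penalty_def
    by (rule C21_powr_le_add) (simp_all add: assms l1norm_nonneg)
  finally show ?thesis .
qed

lemma rank_one_penalty_balanced:
  assumes "\<alpha> > 0" "\<beta> > 0"
  obtains u' v' where "outer u' v' = outer u v"
    and "rank_one_penalty \<alpha> \<beta> u' v'
       = C21 * \<alpha> powr (1/3) * \<beta> powr (2/3) * (norm u * l1norm v) powr (2/3)"
proof (cases "u = 0 \<or> v = 0")
  case True
  then show ?thesis
    by (intro that[of 0 0]) (auto simp: rank_one_penalty_def l1norm_def)
next
  case False
  then have pos: "\<alpha> * (norm u)\<^sup>2 > 0" "\<beta> * l1norm v > 0"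
    using assms l1norm_nonneg[of v] l1norm_eq_zero_iff[of v] by auto
  obtain t where "t > 0"
    and t: "\<alpha> * (norm u)\<^sup>2 * t\<^sup>2 + \<beta> * l1norm v / t
          = C21 * (\<alpha> * (norm u)\<^sup>2) powr (1/3) * (\<beta> * l1norm v) powr (2/3)"
    using C21_powr_attained[OF pos] by blast
  show ?thesis
  proof (rule that)
    show "outer (t *\<^sub>R u) (inverse t *\<^sub>R v) = outer u v"
      using \<open>t > 0\<close> by (simp add: outer_scaleR_inverse)
    have "rank_one_penalty \<alpha> \<beta> (t *\<^sub>R u) (inverse t *\<^sub>R v)
        = \<alpha> * (norm u)\<^sup>2 * t\<^sup>2 + \<beta> * l1norm v / t"
      using \<open>t > 0\<close>
      by (simp add: rank_one_penalty_def l1norm_scaleR power_mult_distrib divide_inverse mult_ac)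
    also have "\<dots> = C21 * \<alpha> powr (1/3) * \<beta> powr (2/3) * (norm u * l1norm v) powr (2/3)"
      using t powr_one_third_mult_powr_two_thirds[of \<alpha> \<beta> "norm u" "l1norm v"] assms
      by (simp add: l1norm_nonneg mult_ac)
    finally show "rank_one_penalty \<alpha> \<beta> (t *\<^sub>R u) (inverse t *\<^sub>R v)
        = C21 * \<alpha> powr (1/3) * \<beta> powr (2/3) * (norm u * l1norm v) powr (2/3)" .
  qed
qed

lemma minimizer_penalty_bound:
  fixes uh u :: "nat \<Rightarrow> real^'n1" and vh v :: "nat \<Rightarrow> real^'n2"
  assumes pos: "\<alpha> > 0" "\<beta> > 0"
    and y: "y = A (\<Sum>r<R. outer (uh r) (vh r)) + \<eta>"
    and minim: "\<And>u' v'. J A y \<alpha> \<beta> R u v \<le> J A y \<alpha> \<beta> R u' v'"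
    and res: "norm (y - A (\<Sum>r<R. outer (u r) (v r))) \<ge> norm \<eta>"
  shows "(\<Sum>r<R. rank_one_penalty \<alpha> \<beta> (u r) (v r))
       \<le> C21 * \<alpha> powr (1/3) * \<beta> powr (2/3) * (\<Sum>r<R. (norm (uh r) * l1norm (vh r)) powr (2/3))"
proof -
  let ?c = "C21 * \<alpha> powr (1/3) * \<beta> powr (2/3)"
  have "\<forall>r. \<exists>u' v'. outer u' v' = outer (uh r) (vh r)
      \<and> rank_one_penalty \<alpha> \<beta> u' v' = ?c * (norm (uh r) * l1norm (vh r)) powr (2/3)"
    by (metis rank_one_penalty_balanced[OF pos])
  then obtain u' v' where same: "\<And>r. outer (u' r) (v' r) = outer (uh r) (vh r)"
    and balanced: "\<And>r. rank_one_penalty \<alpha> \<beta> (u' r) (v' r)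
        = ?c * (norm (uh r) * l1norm (vh r)) powr (2/3)"
    by metis
  have "(norm \<eta>)\<^sup>2 + (\<Sum>r<R. rank_one_penalty \<alpha> \<beta> (u r) (v r)) \<le> J A y \<alpha> \<beta> R u v"
    using res by (simp add: J_eq_misfit_plus_penalty power_mono)
  also have "\<dots> \<le> J A y \<alpha> \<beta> R u' v'"
    by (rule minim)
  also have "\<dots> = (norm \<eta>)\<^sup>2 + ?c * (\<Sum>r<R. (norm (uh r) * l1norm (vh r)) powr (2/3))"
    by (simp add: J_eq_misfit_plus_penalty same balanced y sum_distrib_left)
  finally show ?thesis by simp
qed

lemma powr_thirds_div_left:
  fixes \<alpha> \<beta> :: real
  assumes "\<alpha> > 0" "\<beta> > 0"
  shows "\<alpha> powr (1/3) * \<beta> powr (2/3) / \<alpha> = (\<beta>\<^sup>2 / \<alpha>\<^sup>2) powr (1/3)"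
proof -
  have "\<alpha> powr (1/3) * \<alpha> powr (2/3) = \<alpha>"
    using assms by (simp flip: powr_add)
  then have "\<alpha> powr (1/3) * \<beta> powr (2/3) / \<alpha> = \<beta> powr (2/3) / \<alpha> powr (2/3)"
    using assms by (metis nonzero_mult_divide_mult_cancel_left powr_gt_zero less_irrefl)
  also have "\<dots> = (\<beta>\<^sup>2 / \<alpha>\<^sup>2) powr (1/3)"
    using assms by (simp add: powr_divide square_powr_one_third)
  finally show ?thesis .
qed

lemma powr_thirds_div_right:
  fixes \<alpha> \<beta> :: real
  assumes "\<alpha> > 0" "\<beta> > 0"
  shows "\<alpha> powr (1/3) * \<beta> powr (2/3) / \<beta> = (\<alpha> / \<beta>) powr (1/3)"
proof -
  have "\<beta> powr (2/3) * \<beta> powr (1/3) = \<beta>"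
    using assms by (simp flip: powr_add)
  then have "\<alpha> powr (1/3) * \<beta> powr (2/3) / \<beta> = \<alpha> powr (1/3) / \<beta> powr (1/3)"
    using assms by (metis mult.commute nonzero_mult_divide_mult_cancel_left powr_gt_zero less_irrefl)
  also have "\<dots> = (\<alpha> / \<beta>) powr (1/3)"
    using assms by (simp add: powr_divide)
  finally show ?thesis .
qed

theorem mainTheorem3:
  fixes A :: "real^'n2^'n1 \<Rightarrow> real^'m"
    and R :: nat and \<alpha> \<beta> :: real
    and uh u :: "nat \<Rightarrow> real^'n1" and vh v :: "nat \<Rightarrow> real^'n2"
    and \<eta> y :: "real^'m"
  assumes "linear A"
    and "R \<ge> 1"
    and pos: "\<alpha> > 0" "\<beta> > 0"
    and y: "y = A (\<Sum>r<R. outer (uh r) (vh r)) + \<eta>"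
    and minim: "\<And>u' v'. J A y \<alpha> \<beta> R u v \<le> J A y \<alpha> \<beta> R u' v'"
    and res: "norm (y - A (\<Sum>r<R. outer (u r) (v r))) \<ge> norm \<eta>"
  shows "((\<Sum>r<R. (norm (u r))\<^sup>2)
           \<le> C21 * (\<beta>\<^sup>2 / \<alpha>\<^sup>2) powr (1/3) * (\<Sum>r<R. (norm (uh r) * l1norm (vh r)) powr (2/3)))
    \<and> ((\<Sum>r<R. l1norm (v r))
           \<le> C21 * (\<alpha> / \<beta>) powr (1/3) * (\<Sum>r<R. (norm (uh r) * l1norm (vh r)) powr (2/3)))
    \<and> ((\<Sum>r<R. (norm (u r) * l1norm (v r)) powr (2/3))
           \<le> (\<Sum>r<R. (norm (uh r) * l1norm (vh r)) powr (2/3)))"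
proof -
  define K where "K = (\<Sum>r<R. (norm (uh r) * l1norm (vh r)) powr (2/3))"
  define c where "c = C21 * \<alpha> powr (1/3) * \<beta> powr (2/3)"
  have c_pos: "c > 0" using pos C21_pos by (simp add: c_def)
  have penalty_bound: "(\<Sum>r<R. rank_one_penalty \<alpha> \<beta> (u r) (v r)) \<le> c * K"
    unfolding c_def K_def by (rule minimizer_penalty_bound[OF pos y minim res])
  then have bound: "\<alpha> * (\<Sum>r<R. (norm (u r))\<^sup>2) + \<beta> * (\<Sum>r<R. l1norm (v r)) \<le> c * K"
    by (simp add: rank_one_penalty_def sum.distrib sum_distrib_left)
  have parts_nonneg: "\<alpha> * (\<Sum>r<R. (norm (u r))\<^sup>2) \<ge> 0" "\<beta> * (\<Sum>r<R. l1norm (v r)) \<ge> 0"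
    using pos by (simp_all add: sum_nonneg l1norm_nonneg)
  have "(\<Sum>r<R. (norm (u r))\<^sup>2) \<le> c / \<alpha> * K"
    using bound parts_nonneg(2) pos by (simp add: field_simps)
  also have "c / \<alpha> = C21 * (\<beta>\<^sup>2 / \<alpha>\<^sup>2) powr (1/3)"
    unfolding c_def mult.assoc times_divide_eq_right powr_thirds_div_left[OF pos, symmetric] ..
  moreover have "(\<Sum>r<R. l1norm (v r)) \<le> c / \<beta> * K"
    using bound parts_nonneg(1) pos by (simp add: field_simps)
  moreover have "c / \<beta> = C21 * (\<alpha> / \<beta>) powr (1/3)"
    unfolding c_def mult.assoc times_divide_eq_right powr_thirds_div_right[OF pos, symmetric] ..
  moreover have "c * (\<Sum>r<R. (norm (u r) * l1norm (v r)) powr (2/3))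
      \<le> (\<Sum>r<R. rank_one_penalty \<alpha> \<beta> (u r) (v r))"
    unfolding c_def sum_distrib_left
    by (intro sum_mono rank_one_penalty_lower_bound) (use pos in auto)
  with penalty_bound c_pos have "(\<Sum>r<R. (norm (u r) * l1norm (v r)) powr (2/3)) \<le> K"
    by (meson mult_le_cancel_left_pos order_trans)
  ultimately show ?thesis by (simp add: K_def)
qed

end
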